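(* The clique number of the skeleton of $\mathrm{PYR}(n)$ satisfies $\omega(\mathrm{PYR}(n))=\Theta(n^2)$ as $n\to\infty$; that is, there are constants $c_1,c_2>0$ such that $c_1 n^2\le \omega(\mathrm{PYR}(n))\le c_2 n^2$ for all sufficiently large $n$.
   Context: Let $K_n$ be the complete undirected graph on vertex set $\{1,\dots,n\}$ with edge set $E$. A Hamiltonian cycle $\langle 1,i_1,\dots,i_r,n,j_1,\dots,j_{n-r-2}\rangle$ is called a pyramidal tour if $i_1<i_2<\dots<i_r$ and $j_1>j_2>\dots>j_{n-r-2}$; tours are undirected. Let $PT_n$ be the set of all pyramidal tours. For $x\in PT_n$ its characteristic vector $x^v\in\mathbb{R}^E$ has $x^v_e=1$ if edge $e$ lies in $x$ and $0$ otherwise. The pyramidal tours polytope is $\mathrm{PYR}(n)=\operatorname{conv}\{x^v : x\in PT_n\}$. The skeleton of a polytope is the graph whose vertices are the polytope's vertices and whose edges are its one-dimensional faces. $\omega(\mathrm{PYR}(n))$ denotes the clique number (maximum number of pairwise adjacent vertices) of the skeleton of $\mathrm{PYR}(n)$. *)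

theory Defs
  imports "HOL-Analysis.Analysis" "HOL-Analysis.Finite_Function_Topology"
begin

text \<open>Edges of K_n are 2-element subsets of {1..n}; vectors in R^E are represented
  as finitely supported functions of type (nat set, real) poly_mapping, vanishing outside E.\<close>

definition pyramidal_seq :: "nat \<Rightarrow> nat list \<Rightarrow> bool" where
  "pyramidal_seq n xs \<longleftrightarrow>
     (\<exists>is js. xs = [1] @ is @ [n] @ js \<and> sorted_wrt (<) is \<and> sorted_wrt (>) js)
     \<and> distinct xs \<and> set xs = {1..n}"

definition tour_edges :: "nat list \<Rightarrow> nat set set" where
  "tour_edges xs = {{xs ! k, xs ! (Suc k mod length xs)} | k. k < length xs}"

definition char_vec :: "nat set set \<Rightarrow> (nat set, real) poly_mapping" where
  "char_vec T = Abs_poly_mapping (\<lambda>e. if e \<in> T then 1 else 0)"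

definition PT :: "nat \<Rightarrow> nat set set set" where
  "PT n = tour_edges ` {xs. pyramidal_seq n xs}"

definition PYR :: "nat \<Rightarrow> (nat set, real) poly_mapping set" where
  "PYR n = convex hull (char_vec ` PT n)"

definition skel_vertices :: "nat \<Rightarrow> (nat set, real) poly_mapping set" where
  "skel_vertices n = {x. x extreme_point_of PYR n}"

definition skel_adjacent :: "nat \<Rightarrow> (nat set, real) poly_mapping \<Rightarrow> (nat set, real) poly_mapping \<Rightarrow> bool" where
  "skel_adjacent n x y \<longleftrightarrow> x \<in> skel_vertices n \<and> y \<in> skel_vertices n \<and> x \<noteq> y
     \<and> closed_segment x y face_of PYR n"

definition clique_number_PYR :: "nat \<Rightarrow> nat" where
  "clique_number_PYR n = Max {card C | C. C \<subseteq> skel_vertices n \<and>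
      (\<forall>x\<in>C. \<forall>y\<in>C. x \<noteq> y \<longrightarrow> skel_adjacent n x y)}"

end

theory Submission
  imports Defs
begin

text \<open>A pyramidal tour is determined by the set \<open>S \<subseteq> {2..n-1}\<close> of cities it visits on the way
  up from \<open>1\<close> to \<open>n\<close>; \<open>S\<close> and its complement give the same tour.

  Lower bound: for \<open>m = n div 2\<close> and \<open>2 \<le> p \<le> m < q \<le> n - 2\<close> the block tours with
  \<open>S = {2..p} \<union> {q+1..n-1}\<close> form a clique of about \<open>n\<^sup>2/4\<close> vertices: a tour using only edges of
  two block tours is one of them, so the segment between them is an exposed face.

  Upper bound: a tour is determined by its breaks, the positions \<open>i\<close> where it does not use the edge
  \<open>{i, i + 1}\<close>. If two adjacent tours share a break \<open>c\<close>, splicing them at \<open>c\<close> gives a tour that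
  shares the midpoint of the two, hence is one of them; so their breaks agree below \<open>c\<close> or above
  \<open>c\<close>. A family of subsets of \<open>{1..n}\<close> with this property has at most \<open>(n + 1)\<^sup>2\<close> members.\<close>

section \<open>Families of sets agreeing below or above common elements\<close>

definition left_rigid :: "'a::linorder set set \<Rightarrow> 'a \<Rightarrow> bool" where
  "left_rigid F c \<longleftrightarrow> (\<forall>X\<in>F. \<forall>Y\<in>F. c \<in> X \<longrightarrow> c \<in> Y \<longrightarrow> X \<inter> {..<c} = Y \<inter> {..<c})"

context
  fixes F :: "'a::linorder set set" and N :: "'a set" and z :: 'a
  assumes F_subset: "F \<subseteq> Pow N" and finite_N: "finite N"
    and bottom: "\<And>X. X \<in> F \<Longrightarrow> z \<in> X \<and> X \<inter> {..<z} = {}"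
    and agree: "\<And>X Y c. X \<in> F \<Longrightarrow> Y \<in> F \<Longrightarrow> c \<in> X \<Longrightarrow> c \<in> Y \<Longrightarrow>
      X \<inter> {..<c} = Y \<inter> {..<c} \<or> X \<inter> {c<..} = Y \<inter> {c<..}"
begin

lemma agree_above_if_not_left_rigid:
  assumes "\<not> left_rigid F c" and XY: "X \<in> F" "Y \<in> F" "c \<in> X" "c \<in> Y"
  shows "X \<inter> {c<..} = Y \<inter> {c<..}"
proof -
  obtain X0 Y0 where X0: "X0 \<in> F" "Y0 \<in> F" "c \<in> X0" "c \<in> Y0" and
    differ: "X0 \<inter> {..<c} \<noteq> Y0 \<inter> {..<c}"
    using assms(1) unfolding left_rigid_def by blast
  have "Z \<inter> {c<..} = X0 \<inter> {c<..}" if "Z \<in> F" "c \<in> Z" for Z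
    using agree[OF that(1) X0(1) that(2) X0(3)] agree[OF that(1) X0(2) that(2) X0(4)] agree[OF X0] differ
    by auto
  from this[OF XY(1,3)] this[OF XY(2,4)] show ?thesis by simp
qed

definition last_left_rigid :: "'a set \<Rightarrow> 'a" where
  "last_left_rigid X = Max {c \<in> X. left_rigid F c}"

definition next_left_rigid :: "'a set \<Rightarrow> 'a" where
  "next_left_rigid X = (if X \<inter> {last_left_rigid X<..} = {} then last_left_rigid X
     else Min (X \<inter> {last_left_rigid X<..}))"

lemma last_left_rigid:
  assumes "X \<in> F"
  shows "last_left_rigid X \<in> X" "left_rigid F (last_left_rigid X)"
    and "\<And>c. c \<in> X \<Longrightarrow> left_rigid F c \<Longrightarrow> c \<le> last_left_rigid X"
proof -
  have "finite X" using assms F_subset finite_N finite_subset by blast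
  moreover have "z \<in> {c \<in> X. left_rigid F c}" using bottom assms unfolding left_rigid_def by auto
  ultimately show "last_left_rigid X \<in> X" "left_rigid F (last_left_rigid X)"
    "\<And>c. c \<in> X \<Longrightarrow> left_rigid F c \<Longrightarrow> c \<le> last_left_rigid X"
    using Max_in[of "{c \<in> X. left_rigid F c}"] Max_ge[of "{c \<in> X. left_rigid F c}"]
    unfolding last_left_rigid_def by auto
qed

lemma next_left_rigid:
  assumes "X \<in> F"
  defines "j \<equiv> last_left_rigid X" and "k \<equiv> next_left_rigid X"
  shows "k \<in> X" "j \<le> k" "k = j \<longleftrightarrow> X \<inter> {j<..} = {}"
    and "X = X \<inter> {..<j} \<union> {j, k} \<union> X \<inter> {k<..}"
proof -
  have "finite (X \<inter> {j<..})" using assms F_subset finite_N finite_subset by blast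
  then have next_elem: "k \<in> X" "j < k" "\<And>x. x \<in> X \<Longrightarrow> j < x \<Longrightarrow> k \<le> x" if "X \<inter> {j<..} \<noteq> {}"
    unfolding k_def next_left_rigid_def j_def[symmetric]
    using Min_in[of "X \<inter> {j<..}"] Min_le[of "X \<inter> {j<..}"] that by auto
  have last: "k = j" if "X \<inter> {j<..} = {}" using that unfolding k_def next_left_rigid_def j_def by simp
  show "k \<in> X" "j \<le> k" "k = j \<longleftrightarrow> X \<inter> {j<..} = {}"
    using next_elem last last_left_rigid(1)[OF assms(1)] unfolding j_def
    by (cases "X \<inter> {j<..} = {}"; force)+
  have "x < j \<or> x = j \<or> x = k \<or> k < x" if "x \<in> X" for x
    using next_elem(3) last that by (cases "X \<inter> {j<..} = {}") force+
  with \<open>k \<in> X\<close> last_left_rigid(1)[OF assms(1)] show "X = X \<inter> {..<j} \<union> {j, k} \<union> X \<inter> {k<..}"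
    unfolding j_def by auto
qed

text \<open>A member is determined by its last left-rigid element \<open>j\<close> and the next element \<open>k\<close>:
  below \<open>j\<close> it agrees with every member containing \<open>j\<close>, and above \<open>k\<close> with every member
  containing \<open>k\<close>, since \<open>k\<close> is not left-rigid.\<close>
lemma determined_by_left_rigid:
  assumes XY: "X \<in> F" "Y \<in> F"
    and jk: "last_left_rigid X = last_left_rigid Y" "next_left_rigid X = next_left_rigid Y"
  shows "X = Y"
proof -
  define j k where "j = last_left_rigid X" and "k = next_left_rigid X"
  have below: "X \<inter> {..<j} = Y \<inter> {..<j}"
    using last_left_rigid[OF XY(1)] last_left_rigid(1)[OF XY(2)] XY jk
    unfolding j_def left_rigid_def by metis
  have above: "X \<inter> {k<..} = Y \<inter> {k<..}"
  proof (cases "k = j")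
    case True
    then show ?thesis using next_left_rigid(3)[OF XY(1)] next_left_rigid(3)[OF XY(2)] jk
      unfolding j_def k_def by auto
  next
    case False
    have "\<not> left_rigid F k"
    proof
      assume "left_rigid F k"
      then have "k \<le> j" unfolding j_def k_def by (rule last_left_rigid(3)[OF XY(1) next_left_rigid(1)[OF XY(1)]])
      with False next_left_rigid(2)[OF XY(1)] show False unfolding j_def k_def by simp
    qed
    moreover have "k \<in> X" "k \<in> Y" using next_left_rigid(1) XY jk unfolding k_def by metis+
    ultimately show ?thesis using agree_above_if_not_left_rigid XY by blast
  qed
  have "X = X \<inter> {..<j} \<union> {j, k} \<union> X \<inter> {k<..}" unfolding j_def k_def by (rule next_left_rigid(4)[OF XY(1)])
  also have "\<dots> = Y \<inter> {..<j} \<union> {j, k} \<union> Y \<inter> {k<..}" using below above by simp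
  also have "\<dots> = Y" unfolding j_def k_def jk by (rule next_left_rigid(4)[OF XY(2), symmetric])
  finally show "X = Y" .
qed

lemma card_family_agree_below_or_above: "card F \<le> card N ^ 2"
proof -
  have "inj_on (\<lambda>X. (last_left_rigid X, next_left_rigid X)) F"
    using determined_by_left_rigid by (intro inj_onI) simp
  moreover have "(\<lambda>X. (last_left_rigid X, next_left_rigid X)) ` F \<subseteq> N \<times> N"
    using last_left_rigid(1) next_left_rigid(1) F_subset by blast
  ultimately have "card F \<le> card (N \<times> N)"
    by (metis finite_N card_image card_mono finite_SigmaI)
  then show ?thesis by (simp add: card_cartesian_product power2_eq_square)
qed

end

text \<open>Without a common least element, adjoin \<open>0\<close> as one.\<close>
corollary card_family_agree_below_or_above_nat:
  assumes F: "F \<subseteq> Pow {1..n}"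
    and agree: "\<And>X Y c. X \<in> F \<Longrightarrow> Y \<in> F \<Longrightarrow> c \<in> X \<Longrightarrow> c \<in> Y \<Longrightarrow>
      X \<inter> {..<c} = Y \<inter> {..<c} \<or> X \<inter> {c<..} = Y \<inter> {c<..}"
  shows "card F \<le> (n + 1) ^ 2"
proof -
  have "inj_on (insert 0) F" using F by (intro inj_onI) (metis atLeastAtMost_iff PowD insert_ident not_one_le_zero subsetD)
  then have "card F = card (insert 0 ` F)" by (rule card_image[symmetric])
  also have "\<dots> \<le> card {0..n} ^ 2"
  proof (rule card_family_agree_below_or_above)
    show "insert 0 ` F \<subseteq> Pow {0..n}" using F by fastforce
    fix X Y c assume XY: "X \<in> insert 0 ` F" "Y \<in> insert 0 ` F" "c \<in> X" "c \<in> Y"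
    show "X \<inter> {..<c} = Y \<inter> {..<c} \<or> X \<inter> {c<..} = Y \<inter> {c<..}"
    proof (cases "c = 0")
      case False
      obtain X' Y' where "X' \<in> F" "Y' \<in> F" "X = insert 0 X'" "Y = insert 0 Y'" using XY(1,2) by blast
      with XY(3,4) False show ?thesis using agree[of X' Y' c] by auto
    qed auto
  qed auto
  finally show ?thesis by simp
qed

section \<open>Faces spanned by 0/1 vectors\<close>

lemma lookup_scaleR_poly_mapping:
  "Poly_Mapping.lookup (r *\<^sub>R x) i = r *\<^sub>R Poly_Mapping.lookup x i"
proof -
  have "finite {i. r *\<^sub>R Poly_Mapping.lookup x i \<noteq> 0}"
    by (rule finite_subset[of _ "Poly_Mapping.keys x"]) (auto simp: in_keys_iff)
  then show ?thesis by (simp add: scaleR_poly_mapping_def)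
qed

lemma lookup_char_vec:
  assumes "finite T"
  shows "Poly_Mapping.lookup (char_vec T) e = (if e \<in> T then 1 else 0)"
proof -
  have "finite {e. (if e \<in> T then 1 else 0 :: real) \<noteq> 0}" using assms by simp
  then show ?thesis unfolding char_vec_def by (simp add: Abs_poly_mapping_inverse)
qed

lemma indicator_real_eq_iff: "((if P then 1 else 0 :: real) = (if Q then 1 else 0)) \<longleftrightarrow> (P \<longleftrightarrow> Q)"
  by simp

lemma char_vec_inject:
  assumes "finite T" "finite T'"
  shows "char_vec T = char_vec T' \<longleftrightarrow> T = T'"
proof
  assume "char_vec T = char_vec T'"
  then have "Poly_Mapping.lookup (char_vec T) e = Poly_Mapping.lookup (char_vec T') e" for e by simp
  with assms show "T = T'" by (auto simp: lookup_char_vec indicator_real_eq_iff)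
qed simp

lemma char_vec_not_in_closed_segment:
  assumes "finite T1" "finite T2" "finite T" "T \<noteq> T1" "T \<noteq> T2"
  shows "char_vec T \<notin> closed_segment (char_vec T1) (char_vec T2)"
proof
  assume "char_vec T \<in> closed_segment (char_vec T1) (char_vec T2)"
  then obtain u :: real where u: "0 \<le> u" "u \<le> 1"
    and T: "char_vec T = (1 - u) *\<^sub>R char_vec T1 + u *\<^sub>R char_vec T2"
    by (auto simp: in_segment)
  have coord: "(if e \<in> T then 1 else 0) = (1 - u) * (if e \<in> T1 then 1 else 0) + u * (if e \<in> T2 then 1 else (0::real))"
    for e
    using arg_cong[OF T, of "\<lambda>v. Poly_Mapping.lookup v e"] assms(1-3)
    by (simp add: lookup_add lookup_scaleR_poly_mapping lookup_char_vec)
  obtain e where "e \<in> T \<longleftrightarrow> e \<notin> T1" using assms(4) by blast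
  then have "u = 0 \<or> u = 1" using coord[of e] by (auto split: if_splits)
  then show False
  proof
    assume "u = 0"
    then have "T = T1" using coord by (auto simp: indicator_real_eq_iff)
    with assms(4) show False ..
  next
    assume "u = 1"
    then have "T = T2" using coord by (auto simp: indicator_real_eq_iff)
    with assms(5) show False ..
  qed
qed

lemma closed_segment_face_of_shared_midpoint:
  fixes X Y Z W :: "'a::real_vector"
  assumes face: "closed_segment X Y face_of P" and ZW: "Z \<in> P" "W \<in> P" and sum: "X + Y = Z + W"
  shows "Z \<in> closed_segment X Y"
proof -
  have mid: "midpoint X Y = midpoint Z W" using sum by (simp add: midpoint_def)
  show ?thesis
  proof (cases "Z = W")
    case True
    then have "midpoint X Y = Z" using mid by simp
    then show ?thesis by (metis midpoint_in_closed_segment)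
  next
    case False
    then have "midpoint X Y \<in> open_segment Z W" using mid by (metis midpoint_in_open_segment)
    then show ?thesis using face_ofD[OF face] ZW midpoint_in_closed_segment by blast
  qed
qed

lemma convex_combination_eq_bound:
  fixes a b u K :: real
  assumes "(1 - u) * a + u * b = K" "a \<le> K" "b \<le> K" "0 < u" "u < 1"
  shows "a = K" "b = K"
proof -
  have "(1 - u) * (K - a) + u * (K - b) = 0" using assms(1) by (simp add: algebra_simps)
  moreover have "(1 - u) * (K - a) \<ge> 0" "u * (K - b) \<ge> 0" using assms(2-5) by simp_all
  ultimately have "(1 - u) * (K - a) = 0" "u * (K - b) = 0" by linarith+
  then show "a = K" "b = K" using assms(4,5) by simp_all
qed

lemma linear_convex_combination:
  fixes f :: "'a::real_vector \<Rightarrow> real"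
  shows "linear f \<Longrightarrow> f ((1 - u) *\<^sub>R x + u *\<^sub>R y) = (1 - u) * f x + u * f y"
  by (simp add: linear_add linear_scale)

text \<open>Points of \<open>convex hull V\<close> at level \<open>K\<close> lie in \<open>convex hull Top\<close>, since the other vertices
  are strictly below \<open>K\<close>.\<close>
lemma convex_hull_below_level:
  fixes f :: "'a::real_vector \<Rightarrow> real"
  assumes "linear f"
    and top: "\<And>x. x \<in> Top \<Longrightarrow> f x = K" and below: "\<And>x. x \<in> V - Top \<Longrightarrow> f x < K"
  shows "convex hull V \<subseteq> {x. f x \<le> K \<and> (f x = K \<longrightarrow> x \<in> convex hull Top)}"
proof -
  define Q where "Q = {x. f x \<le> K \<and> (f x = K \<longrightarrow> x \<in> convex hull Top)}"
  have "V \<subseteq> Q"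
  proof
    fix x assume "x \<in> V"
    then show "x \<in> Q" using top below by (cases "x \<in> Top") (auto simp: Q_def hull_inc less_le)
  qed
  moreover have "convex Q"
    unfolding convex_alt
  proof (intro ballI allI impI)
    fix x y and u :: real assume "x \<in> Q" "y \<in> Q" "0 \<le> u \<and> u \<le> 1"
    then have le: "f x \<le> K" "f y \<le> K" "0 \<le> u" "u \<le> 1"
      and top_xy: "f x = K \<Longrightarrow> x \<in> convex hull Top" "f y = K \<Longrightarrow> y \<in> convex hull Top"
      unfolding Q_def by auto
    have "(1 - u) * f x \<le> (1 - u) * K" "u * f y \<le> u * K"
      using le by (simp_all add: mult_left_mono)
    then have "(1 - u) * f x + u * f y \<le> K" by (simp add: algebra_simps)
    moreover have "(1 - u) *\<^sub>R x + u *\<^sub>R y \<in> convex hull Top"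
      if "(1 - u) * f x + u * f y = K"
    proof (cases "u = 0 \<or> u = 1")
      case True
      with that top_xy show ?thesis by auto
    next
      case False
      with that le have "f x = K" "f y = K" using convex_combination_eq_bound[of u "f x" "f y" K] by auto
      with top_xy le show ?thesis by (simp add: convexD_alt)
    qed
    ultimately show "(1 - u) *\<^sub>R x + u *\<^sub>R y \<in> Q"
      using linear_convex_combination[OF \<open>linear f\<close>, of u x y] unfolding Q_def by auto
  qed
  ultimately have "convex hull V \<subseteq> Q" by (simp add: hull_minimal)
  then show ?thesis unfolding Q_def .
qed

lemma convex_hull_face_of_convex_hull_level:
  fixes f :: "'a::real_vector \<Rightarrow> real"
  assumes "linear f" "Top \<subseteq> V"
    and top: "\<And>x. x \<in> Top \<Longrightarrow> f x = K" and below: "\<And>x. x \<in> V - Top \<Longrightarrow> f x < K"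
  shows "convex hull Top face_of convex hull V"
  unfolding face_of_def
proof (intro conjI ballI impI)
  show "convex hull Top \<subseteq> convex hull V" by (rule hull_mono) fact
  note hull_V = convex_hull_below_level[OF \<open>linear f\<close> top below]
  have "convex (f -` {K})" using \<open>linear f\<close> by (rule convex_linear_vimage) simp
  then have "convex hull Top \<subseteq> f -` {K}" using top by (intro hull_minimal) auto
  fix a b x assume ab: "a \<in> convex hull V" "b \<in> convex hull V"
    and "x \<in> convex hull Top" "x \<in> open_segment a b"
  then obtain u where u: "0 < u" "u < 1" and x: "x = (1 - u) *\<^sub>R a + u *\<^sub>R b" and "f x = K"
    using \<open>convex hull Top \<subseteq> f -` {K}\<close> by (auto simp: in_segment)
  moreover have "f a \<le> K" "f b \<le> K" using ab hull_V by auto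
  ultimately have "f a = K" "f b = K"
    using linear_convex_combination[OF \<open>linear f\<close>] convex_combination_eq_bound[of u "f a" "f b" K] by auto
  then show "a \<in> convex hull Top" "b \<in> convex hull Top" using ab hull_V by auto
qed simp

text \<open>The face exposed by the number of edges outside \<open>\<Union>Ts\<close>.\<close>
lemma convex_hull_char_vec_face_of:
  assumes "finite U" "\<forall>T\<in>\<T>. T \<subseteq> U" "Ts \<subseteq> \<T>"
    and closed: "\<And>T. T \<in> \<T> \<Longrightarrow> T \<subseteq> \<Union>Ts \<Longrightarrow> T \<in> Ts"
  shows "convex hull (char_vec ` Ts) face_of convex hull (char_vec ` \<T>)"
proof (rule convex_hull_face_of_convex_hull_level)
  define E where "E = U - \<Union>Ts"
  define f where "f v = - (\<Sum>e\<in>E. Poly_Mapping.lookup v e)" for v :: "(nat set, real) poly_mapping"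
  show "linear f"
    by (rule linearI) (simp_all add: f_def lookup_add lookup_scaleR_poly_mapping sum.distrib sum_distrib_left)
  have finite: "finite T" if "T \<in> \<T>" for T using assms(1,2) that finite_subset by blast
  have f_char_vec: "f (char_vec T) = - real (card (E \<inter> T))" if "T \<in> \<T>" for T
    using finite[OF that] \<open>finite U\<close> by (simp add: f_def E_def lookup_char_vec sum.If_cases Int_commute)
  show "f x = 0" if x: "x \<in> char_vec ` Ts" for x
  proof -
    obtain T where "T \<in> Ts" "x = char_vec T" using x by blast
    moreover have "E \<inter> T = {}" using \<open>T \<in> Ts\<close> unfolding E_def by blast
    ultimately show ?thesis using f_char_vec \<open>Ts \<subseteq> \<T>\<close> by auto
  qed
  show "f x < 0" if x: "x \<in> char_vec ` \<T> - char_vec ` Ts" for x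
  proof -
    obtain T where T: "T \<in> \<T>" "T \<notin> Ts" "x = char_vec T" using x by blast
    then obtain e where "e \<in> T" "e \<notin> \<Union>Ts" using closed by blast
    then have "E \<inter> T \<noteq> {}" using T(1) assms(2) unfolding E_def by blast
    then have "card (E \<inter> T) > 0" using finite[OF T(1)] by (simp add: card_gt_0_iff)
    then show ?thesis using f_char_vec T by simp
  qed
qed (use assms in blast)

section \<open>Pyramidal tours\<close>

definition consecutive :: "nat set \<Rightarrow> nat \<Rightarrow> nat \<Rightarrow> bool" where
  "consecutive A a b \<longleftrightarrow> a \<in> A \<and> b \<in> A \<and> a < b \<and> (\<forall>c\<in>A. \<not> (a < c \<and> c < b))"

definition chain_edges :: "nat set \<Rightarrow> nat set set" where
  "chain_edges A = {{a, b} | a b. consecutive A a b}"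

definition up_chain :: "nat \<Rightarrow> nat set \<Rightarrow> nat set" where
  "up_chain n S = insert 1 (insert n S)"

definition down_chain :: "nat \<Rightarrow> nat set \<Rightarrow> nat set" where
  "down_chain n S = up_chain n ({2..n-1} - S)"

text \<open>The pyramidal tour that visits \<open>S\<close> on its way up from \<open>1\<close> to \<open>n\<close>
  and the remaining cities on its way down.\<close>
definition pyr_edges :: "nat \<Rightarrow> nat set \<Rightarrow> nat set set" where
  "pyr_edges n S = chain_edges (up_chain n S) \<union> chain_edges (down_chain n S)"

lemma consecutive_local:
  assumes "A \<inter> {a..b} = A' \<inter> {a..b}"
  shows "consecutive A a b \<longleftrightarrow> consecutive A' a b"
  using assms unfolding consecutive_def set_eq_iff by (auto 0 3)

lemma consecutive_next:
  assumes "a \<in> A" "w \<in> A" "a < w" "Suc a \<notin> A"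
  obtains b where "Suc (Suc a) \<le> b" "consecutive A a b"
proof -
  define b where "b = (LEAST c. c \<in> A \<and> a < c)"
  have b: "b \<in> A" "a < b" using LeastI[of "\<lambda>c. c \<in> A \<and> a < c" w] assms unfolding b_def by auto
  have "\<not> (a < c \<and> c < b)" if "c \<in> A" for c
    using Least_le[of "\<lambda>c. c \<in> A \<and> a < c" c] that unfolding b_def by fastforce
  then have "consecutive A a b" using b assms(1) unfolding consecutive_def by blast
  moreover have "Suc (Suc a) \<le> b" using b assms(4) by (metis Suc_leI le_neq_implies_less)
  ultimately show ?thesis by (rule that[rotated])
qed

lemma consecutive_gap: "consecutive A a b \<Longrightarrow> a < c \<Longrightarrow> c < b \<Longrightarrow> c \<notin> A"
  unfolding consecutive_def by blast

lemma consecutive_le: "consecutive A a b \<Longrightarrow> c \<in> A \<Longrightarrow> a < c \<Longrightarrow> b \<le> c"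
  unfolding consecutive_def by (meson not_le)

lemma chain_edges_iff:
  assumes "a < b"
  shows "{a, b} \<in> chain_edges A \<longleftrightarrow> consecutive A a b"
proof
  assume "{a, b} \<in> chain_edges A"
  then obtain a' b' where "{a, b} = {a', b'}" "consecutive A a' b'" unfolding chain_edges_def by blast
  moreover from this have "a' < b'" unfolding consecutive_def by simp
  ultimately show "consecutive A a b" using assms by (metis doubleton_eq_iff not_less_iff_gr_or_eq)
qed (auto simp: chain_edges_def)

lemma chain_edges_subset: "chain_edges A \<subseteq> Pow A"
  unfolding chain_edges_def consecutive_def by auto

lemma mem_chain_edgesE:
  assumes "e \<in> chain_edges A"
  obtains a b where "a < b" "e = {a, b}"
  using assms unfolding chain_edges_def consecutive_def by auto

lemma pyr_edges_iff:
  assumes "a < b"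
  shows "{a, b} \<in> pyr_edges n S \<longleftrightarrow> consecutive (up_chain n S) a b \<or> consecutive (down_chain n S) a b"
  using assms by (simp add: pyr_edges_def chain_edges_iff)

lemma mem_pyr_edgesE:
  assumes "e \<in> pyr_edges n S"
  obtains a b where "a < b" "e = {a, b}"
  using assms unfolding pyr_edges_def by (auto elim: mem_chain_edgesE)

lemma mem_up_chain: "c \<in> up_chain n S \<longleftrightarrow> c = 1 \<or> c = n \<or> c \<in> S"
  by (auto simp: up_chain_def)

lemma mem_down_chain: "c \<in> down_chain n S \<longleftrightarrow> c = 1 \<or> c = n \<or> (2 \<le> c \<and> c \<le> n - 1 \<and> c \<notin> S)"
  by (auto simp: down_chain_def up_chain_def)

lemma pyr_edges_complement:
  assumes "S \<subseteq> {2..n-1}"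
  shows "pyr_edges n ({2..n-1} - S) = pyr_edges n S"
proof -
  have "{2..n-1} - ({2..n-1} - S) = S" using assms by auto
  then show ?thesis unfolding pyr_edges_def down_chain_def by auto
qed

lemma pyr_edges_subset:
  assumes "S \<subseteq> {2..n-1}" "1 \<le> n"
  shows "pyr_edges n S \<subseteq> Pow {1..n}"
proof -
  have "up_chain n S \<subseteq> {1..n}" "down_chain n S \<subseteq> {1..n}"
    using assms unfolding up_chain_def down_chain_def by (auto simp: subset_iff)
  then show ?thesis unfolding pyr_edges_def using chain_edges_subset by blast
qed

lemma finite_pyr_edges: "S \<subseteq> {2..n-1} \<Longrightarrow> 1 \<le> n \<Longrightarrow> finite (pyr_edges n S)"
  by (rule finite_subset[OF pyr_edges_subset]) simp_all

definition path_edges :: "'a list \<Rightarrow> 'a set set" where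
  "path_edges xs = (\<lambda>(a, b). {a, b}) ` set (zip xs (tl xs))"

lemma path_edges_simps [simp]:
  "path_edges [] = {}" "path_edges [x] = {}" "path_edges (x # y # xs) = insert {x, y} (path_edges (y # xs))"
  by (simp_all add: path_edges_def)

lemma path_edges_append:
  "path_edges (xs @ y # ys) = path_edges (xs @ [y]) \<union> path_edges (y # ys)"
  by (induction xs rule: induct_list012) auto

lemma path_edges_snoc: "path_edges (xs @ [y, z]) = insert {y, z} (path_edges (xs @ [y]))"
  by (induction xs rule: induct_list012) auto

lemma path_edges_rev: "path_edges (rev xs) = path_edges xs"
  by (induction xs rule: induct_list012) (auto simp: path_edges_snoc[simplified] insert_commute)

lemma consecutive_insert_least:
  assumes "\<forall>z\<in>B. x < z" "y \<in> B" "\<forall>z\<in>B. y \<le> z"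
  shows "consecutive (insert x B) a b \<longleftrightarrow> (a = x \<and> b = y) \<or> consecutive B a b"
proof
  assume a: "consecutive (insert x B) a b"
  show "(a = x \<and> b = y) \<or> consecutive B a b"
  proof (cases "a = x")
    case True
    with a assms(1,2) have "b \<in> B" "\<not> (x < y \<and> y < b)" unfolding consecutive_def by auto
    with assms have "b = y" by (metis order.not_eq_order_implies_strict)
    with True show ?thesis by simp
  next
    case False
    with a assms(1) show ?thesis unfolding consecutive_def by auto
  qed
next
  assume "(a = x \<and> b = y) \<or> consecutive B a b"
  with assms show "consecutive (insert x B) a b"
    unfolding consecutive_def by (auto simp: not_less[symmetric])
qed

lemma chain_edges_insert_least:
  assumes "\<forall>z\<in>B. x < z" "y \<in> B" "\<forall>z\<in>B. y \<le> z"
  shows "chain_edges (insert x B) = insert {x, y} (chain_edges B)"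
  unfolding chain_edges_def consecutive_insert_least[OF assms] by blast

lemma path_edges_sorted:
  assumes "sorted_wrt (<) xs"
  shows "path_edges xs = chain_edges (set xs)"
  using assms
proof (induction xs rule: induct_list012)
  case (3 x y xs)
  then have "chain_edges (insert x (set (y # xs))) = insert {x, y} (chain_edges (set (y # xs)))"
    by (intro chain_edges_insert_least) (auto simp: less_imp_le)
  with 3 show ?case by simp
qed (auto simp: chain_edges_def consecutive_def)

lemma path_edges_conv_nth: "path_edges ys = {{ys ! k, ys ! Suc k} | k. Suc k < length ys}"
proof -
  have "set (zip ys (tl ys)) = {(ys ! k, ys ! Suc k) | k. Suc k < length ys}"
    by (auto simp: set_zip nth_tl)
  then show ?thesis unfolding path_edges_def by auto
qed

lemma tour_edges_eq_path_edges:
  assumes "xs \<noteq> []"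
  shows "tour_edges xs = path_edges (xs @ [hd xs])"
proof -
  have nth_closed: "(xs @ [hd xs]) ! k = xs ! k" "(xs @ [hd xs]) ! Suc k = xs ! (Suc k mod length xs)"
    if "k < length xs" for k
  proof -
    have "Suc k < length xs \<or> Suc k = length xs" using that by linarith
    then show "(xs @ [hd xs]) ! k = xs ! k" "(xs @ [hd xs]) ! Suc k = xs ! (Suc k mod length xs)"
      using that assms by (auto simp: nth_append hd_conv_nth)
  qed
  show ?thesis
    unfolding tour_edges_def path_edges_conv_nth
    by (rule Collect_cong) (metis (no_types, lifting) nth_closed length_append_singleton Suc_less_eq)
qed

lemma tour_edges_pyramidal:
  assumes "xs = 1 # ys @ n # zs" "sorted_wrt (<) ys" "sorted_wrt (>) zs"
    and "set ys \<union> set zs = {2..n-1}" "set ys \<inter> set zs = {}" "1 < n"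
  shows "tour_edges xs = pyr_edges n (set ys)"
proof -
  have "set zs = {2..n-1} - set ys" using assms(4,5) by blast
  then have up: "set (1 # ys @ [n]) = up_chain n (set ys)"
    and down: "set (1 # rev zs @ [n]) = down_chain n (set ys)"
    by (auto simp: up_chain_def down_chain_def)
  have "\<forall>z \<in> set ys \<union> set zs. 1 < z \<and> z < n" using assms(4,6) by auto
  then have "sorted_wrt (<) (1 # ys @ [n])" "sorted_wrt (<) (1 # rev zs @ [n])"
    using assms(2,3,6) by (auto simp: sorted_wrt_append sorted_wrt_rev)
  moreover have "tour_edges xs = path_edges ((1 # ys) @ n # (zs @ [1]))"
    using assms(1) by (simp add: tour_edges_eq_path_edges)
  then have "tour_edges xs = path_edges (1 # ys @ [n]) \<union> path_edges (rev (1 # rev zs @ [n]))"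
    by (subst (asm) path_edges_append) simp
  ultimately show ?thesis
    unfolding path_edges_rev pyr_edges_def by (simp only: path_edges_sorted up down)
qed

lemma PT_eq:
  assumes "2 \<le> n"
  shows "PT n = pyr_edges n ` Pow {2..n-1}"
proof
  show "PT n \<subseteq> pyr_edges n ` Pow {2..n-1}"
  proof
    fix T assume "T \<in> PT n"
    then obtain ys zs where xs: "T = tour_edges (1 # ys @ n # zs)" "sorted_wrt (<) ys" "sorted_wrt (>) zs"
      "distinct (1 # ys @ n # zs)" "set (1 # ys @ n # zs) = {1..n}"
      unfolding PT_def pyramidal_seq_def by auto
    then have "set ys \<union> set zs = {1..n} - {1, n}" "set ys \<inter> set zs = {}" by auto
    moreover have "{1..n} - {1, n} = {2..n-1}" by auto
    ultimately have "set ys \<union> set zs = {2..n-1}" "set ys \<inter> set zs = {}" by simp_all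
    with xs assms have "tour_edges (1 # ys @ n # zs) = pyr_edges n (set ys)"
      by (intro tour_edges_pyramidal) auto
    with xs(1) have "T = pyr_edges n (set ys)" by simp
    with \<open>set ys \<union> set zs = {2..n-1}\<close> show "T \<in> pyr_edges n ` Pow {2..n-1}" by blast
  qed
next
  show "pyr_edges n ` Pow {2..n-1} \<subseteq> PT n"
  proof
    fix T assume "T \<in> pyr_edges n ` Pow {2..n-1}"
    then obtain S where S: "S \<subseteq> {2..n-1}" "T = pyr_edges n S" by blast
    then have "finite S" using finite_subset by blast
    define ys where "ys = sorted_list_of_set S"
    define zs where "zs = rev (sorted_list_of_set ({2..n-1} - S))"
    have ys: "sorted_wrt (<) ys" "set ys = S" and zs: "sorted_wrt (>) zs" "set zs = {2..n-1} - S"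
      using \<open>finite S\<close> by (simp_all add: ys_def zs_def sorted_wrt_rev)
    have "distinct ys" "distinct zs" by (simp_all add: ys_def zs_def)
    moreover have "set (1 # ys @ n # zs) = {1..n}" using ys zs S(1) assms by fastforce
    ultimately have "pyramidal_seq n (1 # ys @ n # zs)"
      unfolding pyramidal_seq_def using ys zs S(1) assms by fastforce
    moreover have "tour_edges (1 # ys @ n # zs) = T"
      using ys zs S assms by (subst tour_edges_pyramidal) auto
    ultimately show "T \<in> PT n" unfolding PT_def by blast
  qed
qed

lemma finite_PT: "2 \<le> n \<Longrightarrow> finite (PT n)"
  by (simp add: PT_eq)

lemma PT_subset_Pow:
  assumes "2 \<le> n" "T \<in> PT n"
  shows "T \<subseteq> Pow {1..n}"
proof -
  have "T \<in> pyr_edges n ` Pow {2..n-1}" using assms PT_eq[of n] by simp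
  then obtain S where "S \<subseteq> {2..n-1}" "T = pyr_edges n S" by blast
  with assms(1) show ?thesis using pyr_edges_subset[of S n] by simp
qed

lemma finite_tour: "2 \<le> n \<Longrightarrow> T \<in> PT n \<Longrightarrow> finite T"
  by (rule finite_subset[OF PT_subset_Pow]) simp_all

lemma convex_hull_tours_face_of_PYR:
  assumes "2 \<le> n" "Ts \<subseteq> PT n" "\<And>T. T \<in> PT n \<Longrightarrow> T \<subseteq> \<Union>Ts \<Longrightarrow> T \<in> Ts"
  shows "convex hull (char_vec ` Ts) face_of PYR n"
  unfolding PYR_def
proof (rule convex_hull_char_vec_face_of[of "Pow {1..n}"])
  show "\<forall>T\<in>PT n. T \<subseteq> Pow {1..n}" using PT_subset_Pow[OF assms(1)] by blast
qed (use assms in simp_all)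

lemma skel_vertices_subset: "skel_vertices n \<subseteq> char_vec ` PT n"
  unfolding skel_vertices_def PYR_def using extreme_point_of_convex_hull by blast

section \<open>A quadratic clique of block tours\<close>

definition block_set :: "nat \<Rightarrow> nat \<Rightarrow> nat \<Rightarrow> nat set" where
  "block_set n p q = {2..p} \<union> {Suc q..n-1}"

context
  fixes n p q :: nat
  assumes pq: "2 \<le> p" "p < q" "q + 2 \<le> n"
begin

lemma up_chain_block_set: "c \<in> up_chain n (block_set n p q) \<longleftrightarrow> (1 \<le> c \<and> c \<le> p) \<or> (q < c \<and> c \<le> n)"
  using pq by (auto simp: up_chain_def block_set_def)

lemma down_chain_block_set: "c \<in> down_chain n (block_set n p q) \<longleftrightarrow> c = 1 \<or> (p < c \<and> c \<le> q) \<or> c = n"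
  using pq by (auto simp: down_chain_def up_chain_def block_set_def)

lemma block_set_subset: "block_set n p q \<subseteq> {2..n-1}"
  using pq by (auto simp: block_set_def)

lemma block_set_long_edge:
  assumes "Suc (Suc a) \<le> b" "{a, b} \<in> pyr_edges n (block_set n p q)"
  shows "(a = 1 \<and> b = Suc p) \<or> (a = p \<and> b = Suc q) \<or> (a = q \<and> b = n)"
proof -
  have "consecutive (up_chain n (block_set n p q)) a b \<or> consecutive (down_chain n (block_set n p q)) a b"
    using assms by (simp add: pyr_edges_iff)
  then show ?thesis
  proof
    assume cons: "consecutive (up_chain n (block_set n p q)) a b"
    have "Suc q \<in> up_chain n (block_set n p q)" using pq by (simp add: up_chain_block_set)
    then have "a < Suc q \<longrightarrow> b \<le> Suc q" using cons consecutive_le by blast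
    moreover have "a \<in> up_chain n (block_set n p q)" "b \<in> up_chain n (block_set n p q)" "a < b"
      "Suc a \<notin> up_chain n (block_set n p q)"
      using cons assms(1) unfolding consecutive_def by auto
    ultimately have "a = p" "b = Suc q" using pq unfolding up_chain_block_set by auto
    then show ?thesis by simp
  next
    assume cons: "consecutive (down_chain n (block_set n p q)) a b"
    have "Suc p \<in> down_chain n (block_set n p q)" using pq by (simp add: down_chain_block_set)
    then have "a < Suc p \<longrightarrow> b \<le> Suc p" using cons consecutive_le by blast
    moreover have "a \<in> down_chain n (block_set n p q)" "b \<in> down_chain n (block_set n p q)" "a < b"
      "Suc a \<notin> down_chain n (block_set n p q)"
      using cons assms(1) unfolding consecutive_def by auto
    ultimately have "a = 1 \<and> b = Suc p \<or> a = q \<and> b = n" using pq unfolding down_chain_block_set by auto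
    then show ?thesis by auto
  qed
qed

lemma block_set_edges: "{1, Suc p} \<in> pyr_edges n (block_set n p q)" "{q, n} \<in> pyr_edges n (block_set n p q)"
  using pq by (auto simp: pyr_edges_iff consecutive_def down_chain_block_set)

end

lemma pyr_edges_block_set_inject:
  assumes "2 \<le> p" "p < q" "q + 2 \<le> n" "2 \<le> p'" "p' < q'" "q' + 2 \<le> n"
    and "pyr_edges n (block_set n p q) = pyr_edges n (block_set n p' q')"
  shows "p = p' \<and> q = q'"
  using block_set_edges[of p q n] block_set_long_edge[of p' q' n 1 "Suc p"]
    block_set_long_edge[of p' q' n q n] assms by auto

definition block_params :: "nat \<Rightarrow> nat \<Rightarrow> (nat \<times> nat) set" where
  "block_params n m = {2..m} \<times> {Suc m..n-2}"

lemma mem_block_params: "(p, q) \<in> block_params n m \<longleftrightarrow> 2 \<le> p \<and> p \<le> m \<and> m < q \<and> q + 2 \<le> n"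
  by (auto simp: block_params_def)

text \<open>Following the edges of the tour from \<open>1\<close> forces the shape of a block tour: the first descent
  leaves \<open>1\<close> for some \<open>p + 1\<close>, the ascent then jumps from \<open>p\<close> to the \<open>q + 1\<close> of the same block tour,
  and the descent from \<open>q\<close> goes straight to \<open>n\<close>.\<close>
lemma block_set_if_long_edges:
  assumes P: "P \<subseteq> block_params n m" and S: "S \<subseteq> {2..n-1}" "2 \<in> S"
    and long: "\<And>a b. Suc (Suc a) \<le> b \<Longrightarrow> {a, b} \<in> pyr_edges n S \<Longrightarrow>
      \<exists>(p, q)\<in>P. (a = 1 \<and> b = Suc p) \<or> (a = p \<and> b = Suc q) \<or> (a = q \<and> b = n)"
  shows "\<exists>(p, q)\<in>P. S = block_set n p q"
proof -
  have params: "2 \<le> p" "p \<le> m" "m < q" "q + 2 \<le> n" if "(p, q) \<in> P" for p q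
    using that P by (auto simp: mem_block_params)
  have edge: "{a, b} \<in> pyr_edges n S" if "consecutive (up_chain n S) a b \<or> consecutive (down_chain n S) a b" for a b
    using that pyr_edges_iff[of a b n S] unfolding consecutive_def by blast
  note U = mem_up_chain[of _ n S] and D = mem_down_chain[of _ n S]
  have "1 \<in> down_chain n S" "n \<in> down_chain n S" "(1::nat) < n" "Suc 1 \<notin> down_chain n S"
    using D S by (auto simp: numeral_2_eq_2)
  then obtain s where s: "Suc (Suc 1) \<le> s" "consecutive (down_chain n S) 1 s"
    by (rule consecutive_next)
  then obtain p q0 where "(p, q0) \<in> P" "s = Suc p" using long[OF s(1) edge] params by fastforce
  then have p: "2 \<le> p" "p \<le> m" "p + 3 \<le> n" using params by fastforce+
  have low: "c \<in> S" if "2 \<le> c" "c \<le> p" for c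
    using consecutive_gap[OF s(2), of c] that \<open>s = Suc p\<close> p D by auto
  have "Suc p \<notin> S" using s(2) \<open>s = Suc p\<close> p D unfolding consecutive_def by auto
  then have "p \<in> up_chain n S" "n \<in> up_chain n S" "p < n" "Suc p \<notin> up_chain n S"
    using U low[of p] p by auto
  then obtain r where r: "Suc (Suc p) \<le> r" "consecutive (up_chain n S) p r"
    by (rule consecutive_next)
  then obtain q where pq: "(p, q) \<in> P" "r = Suc q" using long[OF r(1) edge] params p by fastforce
  then have q: "m < q" "q + 2 \<le> n" using params by blast+
  have mid: "c \<notin> S" if "p < c" "c \<le> q" for c
    using consecutive_gap[OF r(2), of c] that \<open>r = Suc q\<close> U by auto
  have "Suc q \<in> S" using r(2) \<open>r = Suc q\<close> q U unfolding consecutive_def by auto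
  then have "q \<in> down_chain n S" "n \<in> down_chain n S" "q < n" "Suc q \<notin> down_chain n S"
    using D mid[of q] p q by auto
  then obtain t where t: "Suc (Suc q) \<le> t" "consecutive (down_chain n S) q t"
    by (rule consecutive_next)
  then have "t = n" using long[OF t(1) edge] params p q by fastforce
  then have high: "c \<in> S" if "q < c" "c \<le> n - 1" for c
    using consecutive_gap[OF t(2), of c] that D q by auto
  have "S = block_set n p q"
  proof (rule set_eqI)
    fix c
    show "c \<in> S \<longleftrightarrow> c \<in> block_set n p q"
    proof
      assume "c \<in> S"
      with S(1) mid[of c] show "c \<in> block_set n p q" unfolding block_set_def by fastforce
    qed (use low high in \<open>auto simp: block_set_def\<close>)
  qed
  with pq show ?thesis by blast
qed

definition block_tour :: "nat \<Rightarrow> nat \<times> nat \<Rightarrow> nat set set" where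
  "block_tour n pq = pyr_edges n (block_set n (fst pq) (snd pq))"

lemma block_tour_in_PT:
  assumes "pq \<in> block_params n m"
  shows "block_tour n pq \<in> PT n"
proof -
  obtain p q where "pq = (p, q)" "2 \<le> p" "p \<le> m" "m < q" "q + 2 \<le> n"
    using assms by (cases pq) (auto simp: mem_block_params)
  moreover from this have "block_set n p q \<in> Pow {2..n-1}" using block_set_subset by simp
  ultimately show ?thesis by (simp add: block_tour_def PT_eq)
qed

lemma block_tour_inject:
  assumes "pq \<in> block_params n m" "pq' \<in> block_params n m" "block_tour n pq = block_tour n pq'"
  shows "pq = pq'"
proof -
  obtain p q p' q' where "pq = (p, q)" "pq' = (p', q')" by fastforce
  with assms pyr_edges_block_set_inject[of p q n p' q'] show ?thesis
    by (simp add: mem_block_params block_tour_def)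
qed

lemma tour_subset_block_tours:
  assumes "(p1, q1) \<in> block_params n m" "(p2, q2) \<in> block_params n m" "T \<in> PT n"
    and sub: "T \<subseteq> block_tour n (p1, q1) \<union> block_tour n (p2, q2)"
  shows "T = block_tour n (p1, q1) \<or> T = block_tour n (p2, q2)"
proof -
  have pq: "2 \<le> p1" "p1 \<le> m" "m < q1" "q1 + 2 \<le> n" "2 \<le> p2" "p2 \<le> m" "m < q2" "q2 + 2 \<le> n"
    using assms(1,2) by (simp_all add: mem_block_params)
  have "T \<in> pyr_edges n ` Pow {2..n-1}" using assms(3) pq PT_eq[of n] by simp
  then obtain S where S: "S \<subseteq> {2..n-1}" "T = pyr_edges n S" by blast
  text \<open>Replacing \<open>S\<close> by its complement, which gives the same tour, we may assume \<open>2 \<in> S\<close>.\<close>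
  obtain S' where S': "S' \<subseteq> {2..n-1}" "2 \<in> S'" "T = pyr_edges n S'"
  proof (cases "2 \<in> S")
    case False
    have "2 \<le> n - 1" using pq by simp
    with False S pyr_edges_complement[OF S(1)] show ?thesis by (intro that[of "{2..n-1} - S"]) auto
  qed (use S in blast)
  have "\<exists>(p, q)\<in>{(p1, q1), (p2, q2)}. S' = block_set n p q"
  proof (rule block_set_if_long_edges[OF _ S'(1,2)])
    show "{(p1, q1), (p2, q2)} \<subseteq> block_params n m" using assms(1,2) by simp
    fix a b assume long: "Suc (Suc a) \<le> b" "{a, b} \<in> pyr_edges n S'"
    then have "{a, b} \<in> block_tour n (p1, q1) \<or> {a, b} \<in> block_tour n (p2, q2)" using sub S'(3) by blast
    then show "\<exists>(p, q)\<in>{(p1, q1), (p2, q2)}. (a = 1 \<and> b = Suc p) \<or> (a = p \<and> b = Suc q) \<or> (a = q \<and> b = n)"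
      using block_set_long_edge[of p1 q1 n a b] block_set_long_edge[of p2 q2 n a b] pq long(1)
      unfolding block_tour_def by auto
  qed
  with S' show ?thesis by (auto simp: block_tour_def)
qed

lemma block_tours_face_of_PYR:
  assumes "pq1 \<in> block_params n m" "pq2 \<in> block_params n m"
  shows "convex hull (char_vec ` {block_tour n pq1, block_tour n pq2}) face_of PYR n"
proof (rule convex_hull_tours_face_of_PYR)
  show "2 \<le> n" using assms(1) by (cases pq1) (simp add: mem_block_params)
  show "{block_tour n pq1, block_tour n pq2} \<subseteq> PT n" using assms block_tour_in_PT by blast
  show "T \<in> {block_tour n pq1, block_tour n pq2}"
    if "T \<in> PT n" "T \<subseteq> \<Union>{block_tour n pq1, block_tour n pq2}" for T
    using tour_subset_block_tours[of "fst pq1" "snd pq1" n m "fst pq2" "snd pq2" T] assms that by simp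
qed

lemma block_tour_vertex: "pq \<in> block_params n m \<Longrightarrow> char_vec (block_tour n pq) \<in> skel_vertices n"
  using block_tours_face_of_PYR[of pq n m pq]
  by (simp add: skel_vertices_def face_of_singleton)

lemma block_tours_adjacent:
  assumes "pq1 \<in> block_params n m" "pq2 \<in> block_params n m" "pq1 \<noteq> pq2"
  shows "skel_adjacent n (char_vec (block_tour n pq1)) (char_vec (block_tour n pq2))"
proof -
  have n: "2 \<le> n" using assms(1) by (cases pq1) (simp add: mem_block_params)
  have "block_tour n pq1 \<noteq> block_tour n pq2" using block_tour_inject assms by blast
  moreover have "finite (block_tour n pq1)" "finite (block_tour n pq2)"
    using finite_tour[OF n block_tour_in_PT] assms(1,2) by blast+
  ultimately have "char_vec (block_tour n pq1) \<noteq> char_vec (block_tour n pq2)"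
    by (simp add: char_vec_inject)
  then show ?thesis
    using block_tours_face_of_PYR[OF assms(1,2)] block_tour_vertex assms(1,2)
    by (simp add: skel_adjacent_def segment_convex_hull)
qed

section \<open>Splicing tours at a break\<close>

lemma chains_local:
  assumes "\<And>x. a \<le> x \<Longrightarrow> x \<le> b \<Longrightarrow> x \<in> S \<longleftrightarrow> x \<in> S'"
  shows "consecutive (up_chain n S) a b \<longleftrightarrow> consecutive (up_chain n S') a b"
    and "consecutive (down_chain n S) a b \<longleftrightarrow> consecutive (down_chain n S') a b"
proof -
  have "up_chain n S \<inter> {a..b} = up_chain n S' \<inter> {a..b}"
    "down_chain n S \<inter> {a..b} = down_chain n S' \<inter> {a..b}"
    using assms by (auto simp: up_chain_def down_chain_def)
  then show "consecutive (up_chain n S) a b \<longleftrightarrow> consecutive (up_chain n S') a b"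
    "consecutive (down_chain n S) a b \<longleftrightarrow> consecutive (down_chain n S') a b"
    using consecutive_local by blast+
qed

lemma pyr_edges_local:
  assumes "a < b" "\<And>x. a \<le> x \<Longrightarrow> x \<le> b \<Longrightarrow> x \<in> S \<longleftrightarrow> x \<in> S'"
  shows "{a, b} \<in> pyr_edges n S \<longleftrightarrow> {a, b} \<in> pyr_edges n S'"
  using chains_local[OF assms(2)] by (simp add: pyr_edges_iff[OF assms(1)])

lemma short_edge_pyr_edges:
  assumes "S \<subseteq> {2..n-1}" "2 \<le> a" "Suc a \<le> n - 1"
  shows "{a, Suc a} \<in> pyr_edges n S \<longleftrightarrow> (a \<in> S \<longleftrightarrow> Suc a \<in> S)"
proof -
  have "consecutive A a (Suc a) \<longleftrightarrow> a \<in> A \<and> Suc a \<in> A" for A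
    by (auto simp: consecutive_def)
  moreover have "a \<in> up_chain n S \<longleftrightarrow> a \<in> S" "Suc a \<in> up_chain n S \<longleftrightarrow> Suc a \<in> S"
    "a \<in> down_chain n S \<longleftrightarrow> a \<notin> S" "Suc a \<in> down_chain n S \<longleftrightarrow> Suc a \<notin> S"
    using assms by (auto simp: up_chain_def down_chain_def)
  ultimately show ?thesis by (simp add: pyr_edges_iff) blast
qed

lemma crossing_edge_pyr_edges:
  assumes "S \<subseteq> {2..n-1}" "2 \<le> c" "c + 2 \<le> n" "c \<in> S" "Suc c \<notin> S" "a \<le> c" "c < b"
  shows "{a, b} \<in> pyr_edges n S \<longleftrightarrow>
    (a = c \<and> Suc c < b \<and> consecutive (up_chain n S) a b) \<or>
    (a < c \<and> b = Suc c \<and> consecutive (down_chain n S) a b)"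
proof -
  have U: "c \<in> up_chain n S" "Suc c \<notin> up_chain n S"
    and D: "c \<notin> down_chain n S" "Suc c \<in> down_chain n S"
    using assms by (auto simp: up_chain_def down_chain_def)
  have "a < b" using assms(6,7) by simp
  show ?thesis
  proof
    assume "{a, b} \<in> pyr_edges n S"
    then consider (up) "consecutive (up_chain n S) a b" | (down) "consecutive (down_chain n S) a b"
      using pyr_edges_iff[OF \<open>a < b\<close>] by blast
    then show "(a = c \<and> Suc c < b \<and> consecutive (up_chain n S) a b) \<or>
      (a < c \<and> b = Suc c \<and> consecutive (down_chain n S) a b)"
    proof cases
      case up
      have "a = c" using consecutive_gap[OF up, of c] U(1) assms(6,7) by linarith
      moreover have "b \<noteq> Suc c" using up U(2) by (auto simp: consecutive_def)
      ultimately show ?thesis using up assms(7) by auto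
    next
      case down
      have "b = Suc c" using consecutive_gap[OF down, of "Suc c"] D(2) assms(6,7) by linarith
      moreover have "a \<noteq> c" using down D(1) by (auto simp: consecutive_def)
      ultimately show ?thesis using down assms(6) by auto
    qed
  qed (use pyr_edges_iff[OF \<open>a < b\<close>] in blast)
qed

definition splice_at :: "nat \<Rightarrow> nat set \<Rightarrow> nat set \<Rightarrow> nat set" where
  "splice_at c S1 S2 = {i \<in> S1. i \<le> c} \<union> {i \<in> S2. c < i}"

lemma splice_at_subset: "S1 \<subseteq> A \<Longrightarrow> S2 \<subseteq> A \<Longrightarrow> splice_at c S1 S2 \<subseteq> A"
  by (auto simp: splice_at_def)

context
  fixes n c :: nat and S1 S2 :: "nat set"
  assumes S: "S1 \<subseteq> {2..n-1}" "S2 \<subseteq> {2..n-1}" and c: "2 \<le> c" "c + 2 \<le> n"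
    and c_S1: "c \<in> S1" "Suc c \<notin> S1" and c_S2: "c \<in> S2" "Suc c \<notin> S2"
begin

text \<open>Splicing two tours at a common break \<open>c\<close> exchanges their edges crossing the gap
  between \<open>c\<close> and \<open>c + 1\<close>.\<close>
lemma splice_edges:
  assumes "a < b"
  defines "e \<equiv> {a, b}"
  shows "(e \<in> pyr_edges n (splice_at c S1 S2) \<longleftrightarrow> e \<in> pyr_edges n S1) \<and>
      (e \<in> pyr_edges n (splice_at c S2 S1) \<longleftrightarrow> e \<in> pyr_edges n S2) \<or>
    (e \<in> pyr_edges n (splice_at c S1 S2) \<longleftrightarrow> e \<in> pyr_edges n S2) \<and>
      (e \<in> pyr_edges n (splice_at c S2 S1) \<longleftrightarrow> e \<in> pyr_edges n S1)"
proof -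
  consider "b \<le> c" | "c < a" | "a \<le> c" "c < b" by linarith
  then show ?thesis
  proof cases
    case 1
    then show ?thesis unfolding e_def
      by (intro disjI1 conjI pyr_edges_local[OF assms(1)]) (auto simp: splice_at_def)
  next
    case 2
    then show ?thesis unfolding e_def
      by (intro disjI2 conjI pyr_edges_local[OF assms(1)]) (auto simp: splice_at_def)
  next
    case 3
    have S': "splice_at c S1 S2 \<subseteq> {2..n-1}" "c \<in> splice_at c S1 S2" "Suc c \<notin> splice_at c S1 S2"
      "splice_at c S2 S1 \<subseteq> {2..n-1}" "c \<in> splice_at c S2 S1" "Suc c \<notin> splice_at c S2 S1"
      using S c_S1 c_S2 by (auto simp: splice_at_def)
    note cross = crossing_edge_pyr_edges[OF _ c _ _ 3]
    have up: "consecutive (up_chain n (splice_at c S1 S2)) c b \<longleftrightarrow> consecutive (up_chain n S2) c b"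
      "consecutive (up_chain n (splice_at c S2 S1)) c b \<longleftrightarrow> consecutive (up_chain n S1) c b"
      using c_S1 c_S2 by (auto simp: splice_at_def intro!: chains_local)
    have down: "consecutive (down_chain n (splice_at c S1 S2)) a (Suc c) \<longleftrightarrow> consecutive (down_chain n S1) a (Suc c)"
      "consecutive (down_chain n (splice_at c S2 S1)) a (Suc c) \<longleftrightarrow> consecutive (down_chain n S2) a (Suc c)"
      using c_S1 c_S2 by (auto simp: splice_at_def le_Suc_eq intro!: chains_local)
    consider "a = c" "Suc c < b" | "a < c" "b = Suc c" | "\<not> (a = c \<and> Suc c < b)" "\<not> (a < c \<and> b = Suc c)"
      by blast
    then show ?thesis
      unfolding e_def cross[OF S(1) c_S1] cross[OF S(2) c_S2] cross[OF S'(1-3)] cross[OF S'(4-6)]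
      by cases (use up down in auto)
  qed
qed

lemma char_vec_splice:
  "char_vec (pyr_edges n S1) + char_vec (pyr_edges n S2) =
    char_vec (pyr_edges n (splice_at c S1 S2)) + char_vec (pyr_edges n (splice_at c S2 S1))"
proof (rule poly_mapping_eqI)
  fix e
  have "1 \<le> n" using c by simp
  then have fin: "finite (pyr_edges n S)" if "S \<subseteq> {2..n-1}" for S
    using finite_pyr_edges that by blast
  have "splice_at c S1 S2 \<subseteq> {2..n-1}" "splice_at c S2 S1 \<subseteq> {2..n-1}"
    using S by (simp_all add: splice_at_subset)
  note fins = fin[OF S(1)] fin[OF S(2)] fin[OF this(1)] fin[OF this(2)]
  show "Poly_Mapping.lookup (char_vec (pyr_edges n S1) + char_vec (pyr_edges n S2)) e =
    Poly_Mapping.lookup (char_vec (pyr_edges n (splice_at c S1 S2)) + char_vec (pyr_edges n (splice_at c S2 S1))) e"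
  proof (cases "\<exists>a b. a < b \<and> e = {a, b}")
    case True
    then obtain a b where "a < b" "e = {a, b}" by blast
    with splice_edges[of a b] show ?thesis using fins by (auto simp: lookup_add lookup_char_vec)
  next
    case False
    have "e \<notin> pyr_edges n S" for S
    proof
      assume "e \<in> pyr_edges n S"
      then obtain a b where "a < b" "e = {a, b}" by (rule mem_pyr_edgesE)
      with False show False by blast
    qed
    then show ?thesis using fins by (simp add: lookup_add lookup_char_vec)
  qed
qed

end

text \<open>The breaks of a tour are where it switches between its ascending and descending path.\<close>
definition breaks :: "nat \<Rightarrow> nat set set \<Rightarrow> nat set" where
  "breaks n T = {i. 2 \<le> i \<and> i + 2 \<le> n \<and> {i, Suc i} \<notin> T}"

lemma mem_breaks_pyr_edges:
  assumes "S \<subseteq> {2..n-1}"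
  shows "i \<in> breaks n (pyr_edges n S) \<longleftrightarrow> 2 \<le> i \<and> i + 2 \<le> n \<and> (i \<in> S \<longleftrightarrow> Suc i \<notin> S)"
proof -
  have "2 \<le> i \<Longrightarrow> i + 2 \<le> n \<Longrightarrow> {i, Suc i} \<in> pyr_edges n S \<longleftrightarrow> (i \<in> S \<longleftrightarrow> Suc i \<in> S)"
    using short_edge_pyr_edges[OF assms, of i] by simp
  then show ?thesis unfolding breaks_def by auto
qed

lemma breaks_splice_at:
  assumes "S1 \<subseteq> {2..n-1}" "S2 \<subseteq> {2..n-1}"
  shows "breaks n (pyr_edges n (splice_at c S1 S2)) \<inter> {..<c} = breaks n (pyr_edges n S1) \<inter> {..<c}"
    and "breaks n (pyr_edges n (splice_at c S1 S2)) \<inter> {c<..} = breaks n (pyr_edges n S2) \<inter> {c<..}"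
proof -
  have "splice_at c S1 S2 \<subseteq> {2..n-1}" using assms by (rule splice_at_subset)
  note mem = mem_breaks_pyr_edges[OF this] mem_breaks_pyr_edges[OF assms(1)] mem_breaks_pyr_edges[OF assms(2)]
  show "breaks n (pyr_edges n (splice_at c S1 S2)) \<inter> {..<c} = breaks n (pyr_edges n S1) \<inter> {..<c}"
    unfolding set_eq_iff Int_iff mem by (auto simp: splice_at_def)
  show "breaks n (pyr_edges n (splice_at c S1 S2)) \<inter> {c<..} = breaks n (pyr_edges n S2) \<inter> {c<..}"
    unfolding set_eq_iff Int_iff mem by (auto simp: splice_at_def)
qed

text \<open>The breaks record, for each \<open>i\<close>, whether \<open>i\<close> and \<open>i + 1\<close> lie on the same path; this fixes \<open>S\<close>
  up to complement.\<close>
lemma pyr_edges_eq_if_breaks_eq: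
  assumes S1: "S1 \<subseteq> {2..n-1}" and S2: "S2 \<subseteq> {2..n-1}"
    and eq: "breaks n (pyr_edges n S1) = breaks n (pyr_edges n S2)"
  shows "pyr_edges n S1 = pyr_edges n S2"
proof -
  define same where "same i \<longleftrightarrow> (i \<in> S1 \<longleftrightarrow> i \<in> S2)" for i
  have propagate: "same (Suc i) \<longleftrightarrow> same i" if "2 \<le> i" "i + 2 \<le> n" for i
  proof -
    have "i \<in> breaks n (pyr_edges n S1) \<longleftrightarrow> i \<in> breaks n (pyr_edges n S2)" using eq by simp
    then have "(i \<in> S1 \<longleftrightarrow> Suc i \<notin> S1) \<longleftrightarrow> (i \<in> S2 \<longleftrightarrow> Suc i \<notin> S2)"
      using that by (simp add: mem_breaks_pyr_edges[OF S1] mem_breaks_pyr_edges[OF S2])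
    then show ?thesis unfolding same_def by blast
  qed
  have const: "same i \<longleftrightarrow> same 2" if "2 \<le> i" "i \<le> n - 1" for i
    using that
  proof (induction i rule: dec_induct)
    case (step i)
    then show ?case using propagate[of i] by simp
  qed simp
  have outside: "x \<notin> S1" "x \<notin> S2" if "\<not> (2 \<le> x \<and> x \<le> n - 1)" for x
    using that S1 S2 by auto
  show ?thesis
  proof (cases "same 2")
    case True
    have "S1 = S2"
    proof (rule set_eqI)
      fix x show "x \<in> S1 \<longleftrightarrow> x \<in> S2"
        using const[of x] True outside[of x] unfolding same_def by blast
    qed
    then show ?thesis by simp
  next
    case False
    have "S1 = {2..n-1} - S2"
    proof (rule set_eqI)
      fix x show "x \<in> S1 \<longleftrightarrow> x \<in> {2..n-1} - S2"
        using const[of x] False outside[of x] unfolding same_def by auto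
    qed
    then show ?thesis using pyr_edges_complement[OF S2] by simp
  qed
qed

lemma obtain_break_normalized:
  assumes "S \<subseteq> {2..n-1}" "c \<in> breaks n (pyr_edges n S)"
  obtains S' where "S' \<subseteq> {2..n-1}" "pyr_edges n S' = pyr_edges n S" "c \<in> S'" "Suc c \<notin> S'"
proof (cases "c \<in> S")
  case True
  then show ?thesis using that assms mem_breaks_pyr_edges[OF assms(1)] by blast
next
  case False
  then show ?thesis
    using that[of "{2..n-1} - S"] assms mem_breaks_pyr_edges[OF assms(1)] pyr_edges_complement[OF assms(1)]
    by auto
qed

section \<open>The clique number\<close>

definition skel_clique :: "nat \<Rightarrow> (nat set, real) poly_mapping set \<Rightarrow> bool" where
  "skel_clique n C \<longleftrightarrow> C \<subseteq> skel_vertices n \<and> (\<forall>x\<in>C. \<forall>y\<in>C. x \<noteq> y \<longrightarrow> skel_adjacent n x y)"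

lemma finite_skel_cliques: "2 \<le> n \<Longrightarrow> finite {card C | C. skel_clique n C}"
proof -
  assume "2 \<le> n"
  then have "finite (skel_vertices n)"
    using finite_subset[OF skel_vertices_subset] finite_PT by blast
  then have "finite (card ` Pow (skel_vertices n))" by simp
  then show ?thesis by (rule rev_finite_subset) (auto simp: skel_clique_def)
qed

lemma card_le_clique_number_PYR:
  "2 \<le> n \<Longrightarrow> skel_clique n C \<Longrightarrow> card C \<le> clique_number_PYR n"
  unfolding clique_number_PYR_def using finite_skel_cliques[of n]
  by (intro Max_ge) (auto simp: skel_clique_def)

lemma clique_number_PYR_le:
  assumes "2 \<le> n" "\<And>C. skel_clique n C \<Longrightarrow> card C \<le> b"
  shows "clique_number_PYR n \<le> b"
  unfolding clique_number_PYR_def using finite_skel_cliques[OF assms(1)] assms(2)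
  by (intro Max.boundedI) (auto simp: skel_clique_def)

lemma card_block_params_le_clique_number_PYR:
  assumes "2 \<le> n"
  shows "card (block_params n m) \<le> clique_number_PYR n"
proof -
  have "inj_on (char_vec \<circ> block_tour n) (block_params n m)"
  proof (rule inj_onI)
    fix pq pq' assume "pq \<in> block_params n m" "pq' \<in> block_params n m"
      "(char_vec \<circ> block_tour n) pq = (char_vec \<circ> block_tour n) pq'"
    then show "pq = pq'"
      using block_tour_inject char_vec_inject finite_tour[OF assms block_tour_in_PT] by (metis comp_apply)
  qed
  then have "card (block_params n m) = card ((char_vec \<circ> block_tour n) ` block_params n m)"
    by (rule card_image[symmetric])
  also have "\<dots> \<le> clique_number_PYR n"
  proof (intro card_le_clique_number_PYR[OF assms], unfold skel_clique_def, intro conjI ballI impI)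
    show "(char_vec \<circ> block_tour n) ` block_params n m \<subseteq> skel_vertices n"
      using block_tour_vertex by auto
    fix x y assume "x \<in> (char_vec \<circ> block_tour n) ` block_params n m"
      "y \<in> (char_vec \<circ> block_tour n) ` block_params n m" "x \<noteq> y"
    then obtain pq pq' where "pq \<in> block_params n m" "pq' \<in> block_params n m" "pq \<noteq> pq'"
      "x = char_vec (block_tour n pq)" "y = char_vec (block_tour n pq')" by auto
    then show "skel_adjacent n x y" by (simp add: block_tours_adjacent)
  qed
  finally show ?thesis .
qed

text \<open>Splicing at \<open>c\<close> gives tours \<open>Z\<close>, \<open>W\<close> with the same midpoint as \<open>T1\<close>, \<open>T2\<close>; adjacency
  forces \<open>Z \<in> {T1, T2}\<close>, and \<open>Z\<close> has the breaks of \<open>T1\<close> below \<open>c\<close> and of \<open>T2\<close> above.\<close>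
lemma breaks_agree_below_or_above_if_adjacent:
  assumes n: "2 \<le> n" and T: "T1 \<in> PT n" "T2 \<in> PT n"
    and face: "closed_segment (char_vec T1) (char_vec T2) face_of PYR n"
    and c: "c \<in> breaks n T1" "c \<in> breaks n T2"
  shows "breaks n T1 \<inter> {..<c} = breaks n T2 \<inter> {..<c} \<or> breaks n T1 \<inter> {c<..} = breaks n T2 \<inter> {c<..}"
proof -
  obtain S1 S2 where S: "S1 \<subseteq> {2..n-1}" "S2 \<subseteq> {2..n-1}" "T1 = pyr_edges n S1" "T2 = pyr_edges n S2"
    using T n by (auto simp: PT_eq)
  obtain S1' where S1': "S1' \<subseteq> {2..n-1}" "T1 = pyr_edges n S1'" "c \<in> S1'" "Suc c \<notin> S1'"
    using obtain_break_normalized[OF S(1)] c(1) S(3) by metis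
  obtain S2' where S2': "S2' \<subseteq> {2..n-1}" "T2 = pyr_edges n S2'" "c \<in> S2'" "Suc c \<notin> S2'"
    using obtain_break_normalized[OF S(2)] c(2) S(4) by metis
  have c_bounds: "2 \<le> c" "c + 2 \<le> n" using c(1) by (auto simp: breaks_def)
  define Z where "Z = pyr_edges n (splice_at c S1' S2')"
  define W where "W = pyr_edges n (splice_at c S2' S1')"
  have "splice_at c S1' S2' \<in> Pow {2..n-1}" "splice_at c S2' S1' \<in> Pow {2..n-1}"
    using S1'(1) S2'(1) by (simp_all add: splice_at_subset)
  then have "Z \<in> PT n" "W \<in> PT n" using n by (simp_all add: Z_def W_def PT_eq)
  then have "char_vec Z \<in> PYR n" "char_vec W \<in> PYR n" by (auto simp: PYR_def hull_inc)
  moreover have "char_vec T1 + char_vec T2 = char_vec Z + char_vec W"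
    unfolding Z_def W_def S1'(2) S2'(2) using S1' S2' c_bounds by (intro char_vec_splice)
  ultimately have "char_vec Z \<in> closed_segment (char_vec T1) (char_vec T2)"
    by (intro closed_segment_face_of_shared_midpoint[OF face])
  then have "Z = T1 \<or> Z = T2"
    using char_vec_not_in_closed_segment finite_tour[OF n] T \<open>Z \<in> PT n\<close> by blast
  moreover have "breaks n Z \<inter> {..<c} = breaks n T1 \<inter> {..<c}" "breaks n Z \<inter> {c<..} = breaks n T2 \<inter> {c<..}"
    unfolding Z_def S1'(2) S2'(2) using breaks_splice_at[OF S1'(1) S2'(1)] by simp_all
  ultimately show ?thesis by auto
qed

lemma card_skel_clique_le:
  assumes n: "2 \<le> n" and C: "skel_clique n C"
  shows "card C \<le> (n + 1) ^ 2"
proof -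
  define Ts where "Ts = {T \<in> PT n. char_vec T \<in> C}"
  have "finite Ts" using finite_PT[OF n] by (simp add: Ts_def)
  have "C \<subseteq> char_vec ` Ts" using C skel_vertices_subset unfolding skel_clique_def Ts_def by blast
  then have "card C \<le> card Ts" using \<open>finite Ts\<close> by (meson card_image_le card_mono finite_imageI le_trans)
  also have "\<dots> = card (breaks n ` Ts)"
  proof (rule card_image[symmetric], rule inj_onI)
    fix T1 T2 assume "T1 \<in> Ts" "T2 \<in> Ts" "breaks n T1 = breaks n T2"
    moreover from this obtain S1 S2 where "S1 \<subseteq> {2..n-1}" "S2 \<subseteq> {2..n-1}"
      "T1 = pyr_edges n S1" "T2 = pyr_edges n S2"
      using n by (auto simp: Ts_def PT_eq)
    ultimately show "T1 = T2" using pyr_edges_eq_if_breaks_eq by metis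
  qed
  also have "\<dots> \<le> (n + 1) ^ 2"
  proof (rule card_family_agree_below_or_above_nat)
    show "breaks n ` Ts \<subseteq> Pow {1..n}" by (auto simp: breaks_def)
    fix X Y c assume "X \<in> breaks n ` Ts" "Y \<in> breaks n ` Ts" "c \<in> X" "c \<in> Y"
    then obtain T1 T2 where T: "T1 \<in> Ts" "T2 \<in> Ts" "X = breaks n T1" "Y = breaks n T2" by blast
    show "X \<inter> {..<c} = Y \<inter> {..<c} \<or> X \<inter> {c<..} = Y \<inter> {c<..}"
    proof (cases "T1 = T2")
      case False
      then have "char_vec T1 \<noteq> char_vec T2"
        using T(1,2) char_vec_inject finite_tour[OF n] by (auto simp: Ts_def)
      then have "closed_segment (char_vec T1) (char_vec T2) face_of PYR n"
        using C T(1,2) by (auto simp: Ts_def skel_clique_def skel_adjacent_def)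
      then show ?thesis
        using breaks_agree_below_or_above_if_adjacent[OF n] T \<open>c \<in> X\<close> \<open>c \<in> Y\<close> by (auto simp: Ts_def)
    qed (use T in simp)
  qed
  finally show ?thesis .
qed

lemma clique_number_PYR_lower:
  assumes "10 \<le> n"
  shows "n ^ 2 \<le> 16 * clique_number_PYR n"
proof -
  define m where "m = n div 2"
  have "card (block_params n m) = (m - 1) * (n - 2 - m)"
    by (simp add: block_params_def card_cartesian_product)
  moreover have "n \<le> 4 * (m - 1)" "n \<le> 4 * (n - 2 - m)" using assms unfolding m_def by linarith+
  ultimately have "n ^ 2 \<le> 16 * card (block_params n m)"
    unfolding power2_eq_square using mult_le_mono by fastforce
  also have "\<dots> \<le> 16 * clique_number_PYR n"
    using card_block_params_le_clique_number_PYR assms by simp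
  finally show ?thesis .
qed

lemma clique_number_PYR_upper: "2 \<le> n \<Longrightarrow> clique_number_PYR n \<le> (n + 1) ^ 2"
  using card_skel_clique_le by (intro clique_number_PYR_le) auto

theorem theorem6:
  shows "\<exists>c1 c2 :: real. c1 > 0 \<and> c2 > 0 \<and> (\<exists>N. \<forall>n\<ge>N.
           c1 * real n ^ 2 \<le> real (clique_number_PYR n) \<and>
           real (clique_number_PYR n) \<le> c2 * real n ^ 2)"
proof -
  have "1/16 * real n ^ 2 \<le> real (clique_number_PYR n) \<and> real (clique_number_PYR n) \<le> 4 * real n ^ 2"
    if n: "10 \<le> n" for n
  proof
    have "real (n ^ 2) \<le> real (16 * clique_number_PYR n)"
      using clique_number_PYR_lower[OF n] by (rule of_nat_mono)
    then show "1/16 * real n ^ 2 \<le> real (clique_number_PYR n)" by simp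
    have "clique_number_PYR n \<le> 4 * n ^ 2"
      using clique_number_PYR_upper[of n] power_mono[of "n + 1" "2 * n" 2] n
      by (simp add: power_mult_distrib)
    then have "real (clique_number_PYR n) \<le> real (4 * n ^ 2)" by (rule of_nat_mono)
    then show "real (clique_number_PYR n) \<le> 4 * real n ^ 2" by simp
  qed
  then show ?thesis by (intro exI[of _ "1/16"] exI[of _ 4]) auto
qed

end
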